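(* Let $\mathsf{Prop}$ be a non-empty finite set of propositions and $\mathsf{L}$ any fragment of $\mathsf{LTL}_P(\mathsf{Prop})$. For every sample $\mathcal{S}=(\mathcal{P},\mathcal{N})$ of Kripke structures in $\mathcal{T}(\mathsf{Prop})$, if there is an $\mathcal{S}$-separating $\mathsf{L}$-formula, then there is one of size at most $2^{n+1}$, where $n:=\sum_{K\in\mathcal{P}\cup\mathcal{N}}|Q_K|$.
   Context: $\mathsf{LTL}$-formulas over $\mathsf{Prop}$ are interpreted on infinite words $w$ over $2^{\mathsf{Prop}}$: $w\models p$ iff $p\in w[0]$; Boolean connectives as usual; $w\models\mathbf{X}\varphi$ iff $w[1:]\models\varphi$; $w\models\mathbf{F}\varphi$ iff $\exists j$, $w[j:]\models\varphi$; $w\models\mathbf{G}\varphi$ iff $\forall j$, $w[j:]\models\varphi$; $w\models\varphi_1\mathbf{U}\varphi_2$ iff $\exists j$, $w[j:]\models\varphi_2$ and $\forall k<j$, $w[k:]\models\varphi_1$. $\mathsf{LTL}_P(\mathsf{Prop})$ is the two-sorted logic (both sorts final) with grammar $\varphi_P::=p\mid\neg\varphi_P\mid\varphi_P\wedge\varphi_P\mid\varphi_P\vee\varphi_P$ and $\varphi::=\varphi_P\mid\varphi\wedge\varphi\mid\varphi_P\vee\varphi\mid\mathbf{X}\varphi\mid\mathbf{G}\varphi\mid\mathbf{F}\varphi_P\mid\varphi\,\mathbf{U}\,\varphi_P$; its formulas are read as $\mathsf{LTL}$-formulas. Its operators are the propositions, the sort-$P$ operators $\neg,\wedge,\vee$,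 and the general-sort operators $\wedge$, $\vee$ (left argument of sort $P$), $\mathbf{X},\mathbf{G},\mathbf{F}$ (argument of sort $P$), $\mathbf{U}$ (right argument of sort $P$); every sort-$P$ formula may be used where a general-sort formula is expected. A fragment is obtained by allowing only a subset of these operators. $\mathsf{sz}(\varphi)$ is the number of distinct subformulas. $\mathcal{T}(\mathsf{Prop})$: Kripke structures $K=(Q,I,\delta,P,\pi)$ with $Q=Q_K$ finite non-empty, $I\subseteq Q$ non-empty, $\delta:Q\to2^Q$ with $\delta(q)\ne\emptyset$ for all $q$, $P\subseteq\mathsf{Prop}$, $\pi:Q\to2^P$. $\mathsf{Paths}(q)$: infinite $\rho\in q\cdot Q^\omega$ with $\rho[i+1]\in\delta(\rho[i])$, read as the word $\pi(\rho[0])\pi(\rho[1])\cdots$. A state $q$ satisfies $\varphi$ if all $\rho\in\mathsf{Paths}(q)$ satisfy $\varphi$; $K\models\varphi$ if all $q\in I$ satisfy $\varphi$. A sample is a pair of finite sets of such structures; a formula is $\mathcal{S}$-separating if satisfied by all structures in $\mathcal{P}$ and by none in $\mathcal{N}$. *)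

theory Defs
  imports Main
begin

datatype 'p ltl =
    LAtom 'p
  | LNot "'p ltl"
  | LAnd "'p ltl" "'p ltl"
  | LOr "'p ltl" "'p ltl"
  | LX "'p ltl"
  | LF "'p ltl"
  | LG "'p ltl"
  | LU "'p ltl" "'p ltl"

type_synonym 'p word = "nat \<Rightarrow> 'p set"

definition suffix :: "'p word \<Rightarrow> nat \<Rightarrow> 'p word" where
  "suffix w j = (\<lambda>i. w (j + i))"

fun ltl_sat :: "'p word \<Rightarrow> 'p ltl \<Rightarrow> bool" where
  "ltl_sat w (LAtom p) = (p \<in> w 0)"
| "ltl_sat w (LNot \<phi>) = (\<not> ltl_sat w \<phi>)"
| "ltl_sat w (LAnd \<phi> \<psi>) = (ltl_sat w \<phi> \<and> ltl_sat w \<psi>)"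
| "ltl_sat w (LOr \<phi> \<psi>) = (ltl_sat w \<phi> \<or> ltl_sat w \<psi>)"
| "ltl_sat w (LX \<phi>) = ltl_sat (suffix w 1) \<phi>"
| "ltl_sat w (LF \<phi>) = (\<exists>j. ltl_sat (suffix w j) \<phi>)"
| "ltl_sat w (LG \<phi>) = (\<forall>j. ltl_sat (suffix w j) \<phi>)"
| "ltl_sat w (LU \<phi> \<psi>) =
     (\<exists>j. ltl_sat (suffix w j) \<psi> \<and> (\<forall>k<j. ltl_sat (suffix w k) \<phi>))"

text \<open>Sort-P formulas may be used where a
  general formula is expected (implicit coercion, no extra node).\<close>

datatype 'p ltlp =
    PAtom 'p
  | PNot "'p ltlp"
  | PAnd "'p ltlp" "'p ltlp"
  | POr "'p ltlp" "'p ltlp"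
  | GAnd "'p ltlp" "'p ltlp"
  | GOr "'p ltlp" "'p ltlp"
  | GX "'p ltlp"
  | GG "'p ltlp"
  | GF "'p ltlp"
  | GU "'p ltlp" "'p ltlp"

datatype 'p ltlp_op =
    OProp 'p | ONot | OPAnd | OPOr | OAnd | OOr | OX | OG | OF | OU

definition ltlp_ops :: "'p set \<Rightarrow> 'p ltlp_op set" where
  "ltlp_ops Prop = OProp ` Prop \<union> {ONot, OPAnd, OPOr, OAnd, OOr, OX, OG, OF, OU}"

fun is_P_formula :: "'p set \<Rightarrow> 'p ltlp_op set \<Rightarrow> 'p ltlp \<Rightarrow> bool" where
  "is_P_formula Prop L (PAtom p) = (p \<in> Prop \<and> OProp p \<in> L)"
| "is_P_formula Prop L (PNot \<phi>) = (ONot \<in> L \<and> is_P_formula Prop L \<phi>)"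
| "is_P_formula Prop L (PAnd \<phi> \<psi>) = (OPAnd \<in> L \<and> is_P_formula Prop L \<phi> \<and> is_P_formula Prop L \<psi>)"
| "is_P_formula Prop L (POr \<phi> \<psi>) = (OPOr \<in> L \<and> is_P_formula Prop L \<phi> \<and> is_P_formula Prop L \<psi>)"
| "is_P_formula Prop L _ = False"

fun is_G_formula :: "'p set \<Rightarrow> 'p ltlp_op set \<Rightarrow> 'p ltlp \<Rightarrow> bool" where
  "is_G_formula Prop L (GAnd \<phi> \<psi>) = (OAnd \<in> L \<and> is_G_formula Prop L \<phi> \<and> is_G_formula Prop L \<psi>)"
| "is_G_formula Prop L (GOr \<phi> \<psi>) = (OOr \<in> L \<and> is_P_formula Prop L \<phi> \<and> is_G_formula Prop L \<psi>)"
| "is_G_formula Prop L (GX \<phi>) = (OX \<in> L \<and> is_G_formula Prop L \<phi>)"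
| "is_G_formula Prop L (GG \<phi>) = (OG \<in> L \<and> is_G_formula Prop L \<phi>)"
| "is_G_formula Prop L (GF \<phi>) = (OF \<in> L \<and> is_P_formula Prop L \<phi>)"
| "is_G_formula Prop L (GU \<phi> \<psi>) = (OU \<in> L \<and> is_G_formula Prop L \<phi> \<and> is_P_formula Prop L \<psi>)"
| "is_G_formula Prop L \<phi> = is_P_formula Prop L \<phi>"

text \<open>Both sorts are final: an L-formula is a formula of either sort
  (every sort-P formula is also of the general sort).\<close>
definition is_L_formula :: "'p set \<Rightarrow> 'p ltlp_op set \<Rightarrow> 'p ltlp \<Rightarrow> bool" where
  "is_L_formula Prop L \<phi> = is_G_formula Prop L \<phi>"

fun read_ltl :: "'p ltlp \<Rightarrow> 'p ltl" where
  "read_ltl (PAtom p) = LAtom p"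
| "read_ltl (PNot \<phi>) = LNot (read_ltl \<phi>)"
| "read_ltl (PAnd \<phi> \<psi>) = LAnd (read_ltl \<phi>) (read_ltl \<psi>)"
| "read_ltl (POr \<phi> \<psi>) = LOr (read_ltl \<phi>) (read_ltl \<psi>)"
| "read_ltl (GAnd \<phi> \<psi>) = LAnd (read_ltl \<phi>) (read_ltl \<psi>)"
| "read_ltl (GOr \<phi> \<psi>) = LOr (read_ltl \<phi>) (read_ltl \<psi>)"
| "read_ltl (GX \<phi>) = LX (read_ltl \<phi>)"
| "read_ltl (GG \<phi>) = LG (read_ltl \<phi>)"
| "read_ltl (GF \<phi>) = LF (read_ltl \<phi>)"
| "read_ltl (GU \<phi> \<psi>) = LU (read_ltl \<phi>) (read_ltl \<psi>)"

fun subformulas :: "'p ltlp \<Rightarrow> 'p ltlp set" where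
  "subformulas (PAtom p) = {PAtom p}"
| "subformulas (PNot \<phi>) = insert (PNot \<phi>) (subformulas \<phi>)"
| "subformulas (PAnd \<phi> \<psi>) = insert (PAnd \<phi> \<psi>) (subformulas \<phi> \<union> subformulas \<psi>)"
| "subformulas (POr \<phi> \<psi>) = insert (POr \<phi> \<psi>) (subformulas \<phi> \<union> subformulas \<psi>)"
| "subformulas (GAnd \<phi> \<psi>) = insert (GAnd \<phi> \<psi>) (subformulas \<phi> \<union> subformulas \<psi>)"
| "subformulas (GOr \<phi> \<psi>) = insert (GOr \<phi> \<psi>) (subformulas \<phi> \<union> subformulas \<psi>)"
| "subformulas (GX \<phi>) = insert (GX \<phi>) (subformulas \<phi>)"
| "subformulas (GG \<phi>) = insert (GG \<phi>) (subformulas \<phi>)"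
| "subformulas (GF \<phi>) = insert (GF \<phi>) (subformulas \<phi>)"
| "subformulas (GU \<phi> \<psi>) = insert (GU \<phi> \<psi>) (subformulas \<phi> \<union> subformulas \<psi>)"

definition sz :: "'p ltlp \<Rightarrow> nat" where
  "sz \<phi> = card (subformulas \<phi>)"

record ('s, 'p) kripke =
  states :: "'s set"
  init :: "'s set"
  trans :: "'s \<Rightarrow> 's set"
  props :: "'p set"
  lab :: "'s \<Rightarrow> 'p set"

definition in_T :: "'p set \<Rightarrow> ('s, 'p) kripke \<Rightarrow> bool" where
  "in_T Prop K \<longleftrightarrow>
     finite (states K) \<and> states K \<noteq> {} \<and>
     init K \<subseteq> states K \<and> init K \<noteq> {} \<and>
     (\<forall>q\<in>states K. trans K q \<subseteq> states K \<and> trans K q \<noteq> {}) \<and>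
     props K \<subseteq> Prop \<and>
     (\<forall>q\<in>states K. lab K q \<subseteq> props K)"

definition paths :: "('s, 'p) kripke \<Rightarrow> 's \<Rightarrow> (nat \<Rightarrow> 's) set" where
  "paths K q = {\<rho>. \<rho> 0 = q \<and> (\<forall>i. \<rho> (Suc i) \<in> trans K (\<rho> i))}"

definition path_word :: "('s, 'p) kripke \<Rightarrow> (nat \<Rightarrow> 's) \<Rightarrow> 'p word" where
  "path_word K \<rho> = (\<lambda>i. lab K (\<rho> i))"

definition state_sat :: "('s, 'p) kripke \<Rightarrow> 's \<Rightarrow> 'p ltl \<Rightarrow> bool" where
  "state_sat K q \<phi> \<longleftrightarrow> (\<forall>\<rho>\<in>paths K q. ltl_sat (path_word K \<rho>) \<phi>)"

definition kripke_sat :: "('s, 'p) kripke \<Rightarrow> 'p ltl \<Rightarrow> bool" where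
  "kripke_sat K \<phi> \<longleftrightarrow> (\<forall>q\<in>init K. state_sat K q \<phi>)"

definition separating :: "('s, 'p) kripke set \<Rightarrow> ('s, 'p) kripke set \<Rightarrow> 'p ltlp \<Rightarrow> bool" where
  "separating Pos Neg \<phi> \<longleftrightarrow>
     (\<forall>K\<in>Pos. kripke_sat K (read_ltl \<phi>)) \<and> (\<forall>K\<in>Neg. \<not> kripke_sat K (read_ltl \<phi>))"

end

(*
  Since
  the arguments of F, the right argument of U and the left argument of a disjunction are
  propositional, and hence depend on the current state only, the set of states satisfying a
  formula is determined by the sets of states satisfying its immediate subformulas; e.g. q
  satisfies X phi iff every successor of q satisfies phi. Hence the profile of a formula (its
  sort together with its set of satisfying states in every structure of the sample) is a
  congruence. Merging subformulas with equal profiles, as in hash-consing, turns any formula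
  into one with the same profile whose distinct subformulas have distinct profiles; there are
  at most 2 * prod_K 2^|Q_K| = 2^(n+1) profiles.
*)
theory Submission
  imports Defs "HOL-Library.FuncSet"
begin

fun propositional :: "'p ltl \<Rightarrow> bool" where
  "propositional (LAtom p) = True"
| "propositional (LNot f) = propositional f"
| "propositional (LAnd f g) = (propositional f \<and> propositional g)"
| "propositional (LOr f g) = (propositional f \<and> propositional g)"
| "propositional _ = False"

lemma ltl_sat_propositional_cong:
  "propositional f \<Longrightarrow> w 0 = w' 0 \<Longrightarrow> ltl_sat w f = ltl_sat w' f"
  by (induction f) auto

lemma propositional_read_ltl: "is_P_formula Prop L \<phi> \<Longrightarrow> propositional (read_ltl \<phi>)"
  by (induction \<phi>) auto

lemma is_P_formula_imp_is_G_formula: "is_P_formula Prop L \<phi> \<Longrightarrow> is_G_formula Prop L \<phi>"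
  by (cases \<phi>) auto

definition kripke_serial :: "('s, 'p) kripke \<Rightarrow> bool" where
  "kripke_serial K \<longleftrightarrow> (\<forall>q\<in>states K. trans K q \<subseteq> states K \<and> trans K q \<noteq> {})"

lemma in_T_imp_kripke_serial: "in_T Prop K \<Longrightarrow> kripke_serial K"
  unfolding in_T_def kripke_serial_def by blast

lemma path_in_states:
  "kripke_serial K \<Longrightarrow> q \<in> states K \<Longrightarrow> \<rho> \<in> paths K q \<Longrightarrow> \<rho> j \<in> states K"
  by (induction j) (auto simp: paths_def kripke_serial_def)

lemma paths_nonempty:
  assumes "kripke_serial K" "q \<in> states K"
  shows "paths K q \<noteq> {}"
proof -
  obtain \<rho> where "\<forall>n. (\<rho> n \<in> states K \<and> (n = 0 \<longrightarrow> \<rho> n = q)) \<and> \<rho> (Suc n) \<in> trans K (\<rho> n)"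
    using dependent_nat_choice[of "\<lambda>n r. r \<in> states K \<and> (n = 0 \<longrightarrow> r = q)" "\<lambda>_ r r'. r' \<in> trans K r"]
      assms unfolding kripke_serial_def by blast
  then have "\<rho> \<in> paths K q" by (simp add: paths_def)
  then show ?thesis by blast
qed

lemma path_suffix_in_paths: "\<rho> \<in> paths K q \<Longrightarrow> (\<lambda>i. \<rho> (j + i)) \<in> paths K (\<rho> j)"
  by (auto simp: paths_def)

lemma suffix_path_word: "suffix (path_word K \<rho>) j = path_word K (\<lambda>i. \<rho> (j + i))"
  by (simp add: suffix_def path_word_def)

definition path_splice :: "(nat \<Rightarrow> 's) \<Rightarrow> nat \<Rightarrow> (nat \<Rightarrow> 's) \<Rightarrow> nat \<Rightarrow> 's" where
  "path_splice \<rho> k \<sigma> i = (if i \<le> k then \<rho> i else \<sigma> (i - k))"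

lemma path_splice_in_paths:
  assumes "\<rho> \<in> paths K q" "\<sigma> \<in> paths K (\<rho> k)"
  shows "path_splice \<rho> k \<sigma> \<in> paths K q"
  unfolding paths_def mem_Collect_eq
proof (intro conjI allI)
  show "path_splice \<rho> k \<sigma> 0 = q" using assms(1) by (simp add: paths_def path_splice_def)
next
  fix i
  have \<rho>: "\<rho> (Suc i) \<in> trans K (\<rho> i)" and \<sigma>: "\<And>i. \<sigma> (Suc i) \<in> trans K (\<sigma> i)"
    and "\<sigma> 0 = \<rho> k"
    using assms by (simp_all add: paths_def)
  consider "i < k" | "i = k" | "k < i" by linarith
  then show "path_splice \<rho> k \<sigma> (Suc i) \<in> trans K (path_splice \<rho> k \<sigma> i)"
  proof cases
    case 2
    then show ?thesis using \<sigma>[of 0] \<open>\<sigma> 0 = \<rho> k\<close> by (simp add: path_splice_def)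
  next
    case 3
    then have "Suc i - k = Suc (i - k)" by simp
    then show ?thesis using 3 \<sigma>[of "i - k"] by (simp add: path_splice_def)
  qed (use \<rho> in \<open>simp add: path_splice_def\<close>)
qed

lemma path_splice_suffix: "\<sigma> 0 = \<rho> k \<Longrightarrow> (\<lambda>i. path_splice \<rho> k \<sigma> (k + i)) = \<sigma>"
  by (rule ext) (simp add: path_splice_def)

lemma state_sat_propositional:
  assumes "propositional f" "\<rho> \<in> paths K q"
  shows "state_sat K q f = ltl_sat (path_word K \<rho>) f"
proof -
  have "ltl_sat (path_word K \<sigma>) f = ltl_sat (path_word K \<rho>) f" if "\<sigma> \<in> paths K q" for \<sigma>
    using that assms by (intro ltl_sat_propositional_cong) (simp_all add: paths_def path_word_def)
  then show ?thesis using assms(2) unfolding state_sat_def by blast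
qed

lemma state_sat_imp_ltl_sat_suffix:
  "\<rho> \<in> paths K q \<Longrightarrow> state_sat K (\<rho> j) f \<Longrightarrow> ltl_sat (suffix (path_word K \<rho>) j) f"
  unfolding state_sat_def suffix_path_word by (blast dest: path_suffix_in_paths)

lemma ltl_sat_suffix_propositional:
  "propositional f \<Longrightarrow> \<rho> \<in> paths K q \<Longrightarrow>
    ltl_sat (suffix (path_word K \<rho>) j) f = state_sat K (\<rho> j) f"
  unfolding suffix_path_word by (rule state_sat_propositional[symmetric, OF _ path_suffix_in_paths])

lemma all_paths_ltl_sat_suffix_iff:
  "(\<forall>\<rho>\<in>paths K q. ltl_sat (suffix (path_word K \<rho>) j) f) \<longleftrightarrow>
    (\<forall>\<rho>\<in>paths K q. state_sat K (\<rho> j) f)"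
proof (intro iffI ballI)
  fix \<rho> assume all: "\<forall>\<rho>\<in>paths K q. ltl_sat (suffix (path_word K \<rho>) j) f" and "\<rho> \<in> paths K q"
  show "state_sat K (\<rho> j) f"
    unfolding state_sat_def
  proof
    fix \<sigma> assume \<sigma>: "\<sigma> \<in> paths K (\<rho> j)"
    have "path_splice \<rho> j \<sigma> \<in> paths K q"
      using path_splice_in_paths[OF \<open>\<rho> \<in> paths K q\<close> \<sigma>] .
    then have "ltl_sat (suffix (path_word K (path_splice \<rho> j \<sigma>)) j) f"
      using all by blast
    moreover have "\<sigma> 0 = \<rho> j" using \<sigma> by (simp add: paths_def)
    ultimately show "ltl_sat (path_word K \<sigma>) f"
      by (simp add: suffix_path_word path_splice_suffix)
  qed
next
  fix \<rho> assume "\<forall>\<rho>\<in>paths K q. state_sat K (\<rho> j) f" "\<rho> \<in> paths K q"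
  then show "ltl_sat (suffix (path_word K \<rho>) j) f" by (simp add: state_sat_imp_ltl_sat_suffix)
qed

lemma state_sat_LAnd: "state_sat K q (LAnd f g) \<longleftrightarrow> state_sat K q f \<and> state_sat K q g"
  unfolding state_sat_def by auto

lemma state_sat_LOr:
  assumes "propositional f"
  shows "state_sat K q (LOr f g) \<longleftrightarrow> state_sat K q f \<or> state_sat K q g"
proof -
  have f_const: "ltl_sat (path_word K \<sigma>) f \<longleftrightarrow> state_sat K q f" if "\<sigma> \<in> paths K q" for \<sigma>
    using state_sat_propositional[OF assms that] by (rule sym)
  show ?thesis
  proof (cases "state_sat K q f")
    case True
    then show ?thesis using f_const unfolding state_sat_def[of K q "LOr f g"] by simp
  next
    case False
    then show ?thesis
      using f_const unfolding state_sat_def[of K q "LOr f g"] state_sat_def[of K q g] by simp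
  qed
qed

lemma state_sat_LNot:
  assumes "propositional f" "paths K q \<noteq> {}"
  shows "state_sat K q (LNot f) \<longleftrightarrow> \<not> state_sat K q f"
proof -
  obtain \<rho> where \<rho>: "\<rho> \<in> paths K q" using assms(2) by blast
  have "state_sat K q (LNot f) \<longleftrightarrow> ltl_sat (path_word K \<rho>) (LNot f)"
    using assms(1) \<rho> by (intro state_sat_propositional) simp_all
  moreover have "state_sat K q f \<longleftrightarrow> ltl_sat (path_word K \<rho>) f"
    using assms(1) \<rho> by (rule state_sat_propositional)
  ultimately show ?thesis by simp
qed

lemma state_sat_LX: "state_sat K q (LX f) \<longleftrightarrow> (\<forall>\<rho>\<in>paths K q. state_sat K (\<rho> 1) f)"
proof -
  have "state_sat K q (LX f) \<longleftrightarrow> (\<forall>\<rho>\<in>paths K q. ltl_sat (suffix (path_word K \<rho>) 1) f)"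
    by (simp add: state_sat_def[of K q])
  then show ?thesis by (simp only: all_paths_ltl_sat_suffix_iff)
qed

lemma state_sat_LG: "state_sat K q (LG f) \<longleftrightarrow> (\<forall>\<rho>\<in>paths K q. \<forall>j. state_sat K (\<rho> j) f)"
proof -
  have "state_sat K q (LG f) \<longleftrightarrow> (\<forall>j. \<forall>\<rho>\<in>paths K q. ltl_sat (suffix (path_word K \<rho>) j) f)"
    by (auto simp: state_sat_def[of K q])
  then show ?thesis by (auto simp only: all_paths_ltl_sat_suffix_iff)
qed

lemma state_sat_LF:
  assumes "propositional f"
  shows "state_sat K q (LF f) \<longleftrightarrow> (\<forall>\<rho>\<in>paths K q. \<exists>j. state_sat K (\<rho> j) f)"
  by (simp add: state_sat_def[of K q] ltl_sat_suffix_propositional[OF assms])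

lemma state_sat_LU:
  assumes g: "propositional g"
  shows "state_sat K q (LU f g) \<longleftrightarrow>
    (\<forall>\<rho>\<in>paths K q. \<exists>j. state_sat K (\<rho> j) g \<and> (\<forall>k<j. state_sat K (\<rho> k) f))"
proof (intro iffI ballI)
  fix \<rho> assume until: "state_sat K q (LU f g)" and \<rho>: "\<rho> \<in> paths K q"
  then obtain j where "ltl_sat (suffix (path_word K \<rho>) j) g"
    unfolding state_sat_def[of K q] by fastforce
  then have "\<exists>j. state_sat K (\<rho> j) g" using ltl_sat_suffix_propositional[OF g \<rho>] by blast
  then obtain j where j: "state_sat K (\<rho> j) g" and before: "\<forall>k<j. \<not> state_sat K (\<rho> k) g"
    by (auto simp: exists_least_iff[of "\<lambda>j. state_sat K (\<rho> j) g"])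
  have "state_sat K (\<rho> k) f" if "k < j" for k
    unfolding state_sat_def[of K "\<rho> k"]
  proof
    fix \<sigma> assume \<sigma>: "\<sigma> \<in> paths K (\<rho> k)"
    let ?\<tau> = "path_splice \<rho> k \<sigma>"
    have \<tau>: "?\<tau> \<in> paths K q" using path_splice_in_paths[OF \<rho> \<sigma>] .
    then obtain j' where j': "state_sat K (?\<tau> j') g" "\<forall>k'<j'. ltl_sat (suffix (path_word K ?\<tau>) k') f"
      using until ltl_sat_suffix_propositional[OF g \<tau>] unfolding state_sat_def[of K q] by auto
    \<comment> \<open>The spliced path agrees with \<rho> up to k, where g does not hold yet.\<close>
    have "k < j'"
      using j'(1) before \<open>k < j\<close> by (cases "j' \<le> k") (auto simp: path_splice_def)
    then have "ltl_sat (suffix (path_word K ?\<tau>) k) f" using j'(2) by blast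
    moreover have "\<sigma> 0 = \<rho> k" using \<sigma> by (simp add: paths_def)
    ultimately show "ltl_sat (path_word K \<sigma>) f"
      by (simp add: suffix_path_word path_splice_suffix)
  qed
  with j show "\<exists>j. state_sat K (\<rho> j) g \<and> (\<forall>k<j. state_sat K (\<rho> k) f)" by blast
next
  assume all: "\<forall>\<rho>\<in>paths K q. \<exists>j. state_sat K (\<rho> j) g \<and> (\<forall>k<j. state_sat K (\<rho> k) f)"
  show "state_sat K q (LU f g)"
    unfolding state_sat_def[of K q]
  proof
    fix \<rho> assume \<rho>: "\<rho> \<in> paths K q"
    then obtain j where "state_sat K (\<rho> j) g" "\<forall>k<j. state_sat K (\<rho> k) f" using all by blast
    then show "ltl_sat (path_word K \<rho>) (LU f g)"
      using ltl_sat_suffix_propositional[OF g \<rho>] state_sat_imp_ltl_sat_suffix[OF \<rho>] by auto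
  qed
qed

lemma card_bool_times_PiE_Pow:
  assumes "finite Ks" "\<And>K. K \<in> Ks \<Longrightarrow> finite (S K)"
  shows "card ((UNIV :: bool set) \<times> (\<Pi>\<^sub>E K\<in>Ks. Pow (S K))) = 2 ^ ((\<Sum>K\<in>Ks. card (S K)) + 1)"
proof -
  have "card ((UNIV :: bool set) \<times> (\<Pi>\<^sub>E K\<in>Ks. Pow (S K))) = 2 * (\<Prod>K\<in>Ks. 2 ^ card (S K))"
    using assms by (simp add: card_cartesian_product card_PiE card_Pow)
  also have "\<dots> = 2 ^ ((\<Sum>K\<in>Ks. card (S K)) + 1)" by (simp add: power_sum)
  finally show ?thesis .
qed

locale ltlp_profiles =
  fixes Prop :: "'p set" and L :: "'p ltlp_op set" and Ks :: "('s, 'p) kripke set"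
  assumes serial: "K \<in> Ks \<Longrightarrow> kripke_serial K"
begin

text \<open>The sort is part of the profile so that replacing a subformula by one with the same
  profile keeps the formula well-sorted.\<close>
definition profile :: "'p ltlp \<Rightarrow> bool \<times> (('s, 'p) kripke \<Rightarrow> 's set)" where
  "profile \<phi> = (is_P_formula Prop L \<phi>, \<lambda>K\<in>Ks. {q \<in> states K. state_sat K q (read_ltl \<phi>)})"

lemma profile_eq_iff:
  "profile \<phi> = profile \<psi> \<longleftrightarrow> is_P_formula Prop L \<phi> = is_P_formula Prop L \<psi> \<and>
    (\<forall>K\<in>Ks. \<forall>q\<in>states K. state_sat K q (read_ltl \<phi>) = state_sat K q (read_ltl \<psi>))"
proof -
  have restrict_eq: "restrict f Ks = restrict g Ks \<longleftrightarrow> (\<forall>K\<in>Ks. f K = g K)" for f g :: "_ \<Rightarrow> 's set"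
    by (metis restrict_apply' restrict_ext)
  show ?thesis unfolding profile_def prod.inject restrict_eq by blast
qed

lemma profile_eq_imp_is_P_formula_eq:
  "profile \<phi> = profile \<psi> \<Longrightarrow> is_P_formula Prop L \<phi> = is_P_formula Prop L \<psi>"
  by (simp add: profile_eq_iff)

lemma profile_eq_imp_state_sat_eq:
  assumes "profile \<phi> = profile \<psi>" "K \<in> Ks" "q \<in> states K" "\<rho> \<in> paths K q"
  shows "state_sat K (\<rho> j) (read_ltl \<phi>) = state_sat K (\<rho> j) (read_ltl \<psi>)"
  using assms path_in_states[OF serial] by (simp add: profile_eq_iff)

lemma profile_cong_unary:
  assumes a: "profile a' = profile a"
  shows "profile (GX a') = profile (GX a)"
    and "profile (GG a') = profile (GG a)"
    and "is_P_formula Prop L a \<Longrightarrow> profile (PNot a') = profile (PNot a)"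
    and "is_P_formula Prop L a \<Longrightarrow> profile (GF a') = profile (GF a)"
proof -
  note sort = profile_eq_imp_is_P_formula_eq[OF a]
  note on_paths = profile_eq_imp_state_sat_eq[OF a]
  show "profile (GX a') = profile (GX a)"
    unfolding profile_eq_iff read_ltl.simps state_sat_LX using sort on_paths by auto
  show "profile (GG a') = profile (GG a)"
    unfolding profile_eq_iff read_ltl.simps state_sat_LG using sort on_paths by auto
  have props: "propositional (read_ltl a')" "propositional (read_ltl a)" if "is_P_formula Prop L a"
    using that sort propositional_read_ltl by blast+
  show "profile (PNot a') = profile (PNot a)" if "is_P_formula Prop L a"
    using a props[OF that] by (auto simp: profile_eq_iff state_sat_LNot paths_nonempty serial)
  show "profile (GF a') = profile (GF a)" if "is_P_formula Prop L a"
    unfolding profile_eq_iff read_ltl.simps state_sat_LF[OF props(1)[OF that]]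
      state_sat_LF[OF props(2)[OF that]]
    using sort on_paths by auto
qed

lemma profile_cong_binary:
  assumes a: "profile a' = profile a" and b: "profile b' = profile b"
  shows "profile (PAnd a' b') = profile (PAnd a b)"
    and "profile (GAnd a' b') = profile (GAnd a b)"
    and "is_P_formula Prop L a \<Longrightarrow> profile (POr a' b') = profile (POr a b)"
    and "is_P_formula Prop L a \<Longrightarrow> profile (GOr a' b') = profile (GOr a b)"
    and "is_P_formula Prop L b \<Longrightarrow> profile (GU a' b') = profile (GU a b)"
proof -
  note sort = profile_eq_imp_is_P_formula_eq[OF a] profile_eq_imp_is_P_formula_eq[OF b]
  show "profile (PAnd a' b') = profile (PAnd a b)" "profile (GAnd a' b') = profile (GAnd a b)"
    using a b by (simp_all add: profile_eq_iff state_sat_LAnd)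
  show "profile (POr a' b') = profile (POr a b)" "profile (GOr a' b') = profile (GOr a b)"
    if "is_P_formula Prop L a"
    using a b that sort(1) by (simp_all add: profile_eq_iff state_sat_LOr propositional_read_ltl)
  show "profile (GU a' b') = profile (GU a b)" if "is_P_formula Prop L b"
  proof -
    have props: "propositional (read_ltl b')" "propositional (read_ltl b)"
      using that sort(2) propositional_read_ltl by blast+
    show ?thesis
      unfolding profile_eq_iff read_ltl.simps state_sat_LU[OF props(1)] state_sat_LU[OF props(2)]
      using sort profile_eq_imp_state_sat_eq[OF a] profile_eq_imp_state_sat_eq[OF b] by auto
  qed
qed

definition irredundant :: "'p ltlp set \<Rightarrow> bool" where
  "irredundant D \<longleftrightarrow>
    (\<forall>\<psi>\<in>D. subformulas \<psi> \<subseteq> D \<and> is_G_formula Prop L \<psi>) \<and> inj_on profile D"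

definition saturated :: "'p ltlp set \<Rightarrow> bool" where
  "saturated D \<longleftrightarrow> irredundant D \<and>
    (\<forall>\<chi>. is_G_formula Prop L \<chi> \<and> subformulas \<chi> \<subseteq> insert \<chi> D \<longrightarrow> profile \<chi> \<in> profile ` D)"

lemma irredundant_card_le:
  assumes "finite (range profile)" "irredundant D"
  shows "finite D" "card D \<le> card (range profile)"
proof -
  have inj: "inj_on profile D" using assms(2) by (simp add: irredundant_def)
  have "finite (profile ` D)" using assms(1) by (rule finite_subset[rotated]) blast
  then show "finite D" using inj by (rule finite_imageD)
  have "card D = card (profile ` D)" using inj by (rule card_image[symmetric])
  also have "\<dots> \<le> card (range profile)" using assms(1) by (rule card_mono) blast
  finally show "card D \<le> card (range profile)" .
qed

lemma irredundant_insert: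
  assumes "irredundant D" "is_G_formula Prop L \<chi>" "subformulas \<chi> \<subseteq> insert \<chi> D"
    and "profile \<chi> \<notin> profile ` D"
  shows "irredundant (insert \<chi> D)"
  using assms unfolding irredundant_def by (auto intro: subset_insertI2)

text \<open>An irredundant set of maximal cardinality is saturated.\<close>
lemma saturated_exists:
  assumes "finite (range profile)"
  shows "\<exists>D. saturated D"
proof -
  have "irredundant {}" by (simp add: irredundant_def)
  moreover have "\<forall>D. irredundant D \<longrightarrow> card D < Suc (card (range profile))"
    using irredundant_card_le(2)[OF assms] by (simp add: less_Suc_eq_le)
  ultimately obtain D where D: "irredundant D" and max: "\<And>D'. irredundant D' \<Longrightarrow> card D' \<le> card D"
    using Lattices_Big.ex_has_greatest_nat[of irredundant "{}" card] by blast
  have "profile \<chi> \<in> profile ` D"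
    if "is_G_formula Prop L \<chi>" "subformulas \<chi> \<subseteq> insert \<chi> D" for \<chi>
  proof (rule ccontr)
    assume new: "profile \<chi> \<notin> profile ` D"
    then have "\<chi> \<notin> D" by blast
    have "card (insert \<chi> D) \<le> card D"
      using irredundant_insert[OF D that new] by (rule max)
    with \<open>\<chi> \<notin> D\<close> irredundant_card_le(1)[OF assms D] show False by simp
  qed
  with D show ?thesis unfolding saturated_def by blast
qed

lemma saturated_imageI:
  assumes "saturated D" "is_G_formula Prop L \<chi>'" "subformulas \<chi>' - {\<chi>'} \<subseteq> D"
    and "profile \<chi>' = profile \<chi>"
  shows "profile \<chi> \<in> profile ` D"
proof -
  have "subformulas \<chi>' \<subseteq> insert \<chi>' D" using assms(3) by blast
  then have "profile \<chi>' \<in> profile ` D" using assms(1,2) unfolding saturated_def by blast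
  then show ?thesis using assms(4) by simp
qed

lemma saturated_memD:
  "saturated D \<Longrightarrow> \<psi> \<in> D \<Longrightarrow> subformulas \<psi> \<subseteq> D \<and> is_G_formula Prop L \<psi>"
  by (simp add: saturated_def irredundant_def)

lemma saturated_unary:
  assumes sat: "saturated D" and "profile a \<in> profile ` D"
    and cong: "\<And>a'. is_G_formula Prop L a' \<Longrightarrow> profile a' = profile a \<Longrightarrow>
      is_G_formula Prop L (C a') \<and> profile (C a') = profile (C a)"
    and subformulas_C: "\<And>x. subformulas (C x) = insert (C x) (subformulas x)"
  shows "profile (C a) \<in> profile ` D"
proof -
  obtain a' where a': "a' \<in> D" "profile a' = profile a" using assms(2) by (metis imageE)
  then have "subformulas a' \<subseteq> D" "is_G_formula Prop L a'" using saturated_memD[OF sat] by blast+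
  then have "subformulas (C a') - {C a'} \<subseteq> D" "is_G_formula Prop L (C a')"
    "profile (C a') = profile (C a)"
    using cong[OF _ a'(2)] unfolding subformulas_C[of a'] by blast+
  then show ?thesis by (intro saturated_imageI[OF sat, of "C a'"])
qed

lemma saturated_binary:
  assumes sat: "saturated D" and "profile a \<in> profile ` D" "profile b \<in> profile ` D"
    and cong: "\<And>a' b'. is_G_formula Prop L a' \<Longrightarrow> is_G_formula Prop L b' \<Longrightarrow>
      profile a' = profile a \<Longrightarrow> profile b' = profile b \<Longrightarrow>
      is_G_formula Prop L (C a' b') \<and> profile (C a' b') = profile (C a b)"
    and subformulas_C: "\<And>x y. subformulas (C x y) = insert (C x y) (subformulas x \<union> subformulas y)"
  shows "profile (C a b) \<in> profile ` D"
proof -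
  obtain a' b' where a': "a' \<in> D" "profile a' = profile a" and b': "b' \<in> D" "profile b' = profile b"
    using assms(2,3) by (metis imageE)
  then have "subformulas a' \<subseteq> D" "is_G_formula Prop L a'" "subformulas b' \<subseteq> D" "is_G_formula Prop L b'"
    using saturated_memD[OF sat] by blast+
  then have "subformulas (C a' b') - {C a' b'} \<subseteq> D" "is_G_formula Prop L (C a' b')"
    "profile (C a' b') = profile (C a b)"
    using cong[OF _ _ a'(2) b'(2)] unfolding subformulas_C[of a' b'] by blast+
  then show ?thesis by (intro saturated_imageI[OF sat, of "C a' b'"])
qed

lemma saturated_represents:
  assumes sat: "saturated D" and "is_G_formula Prop L \<phi>"
  shows "profile \<phi> \<in> profile ` D"
  using assms(2)
proof (induction \<phi>)
  case (PAtom p)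
  then show ?case by (intro saturated_imageI[OF sat, of "PAtom p"]) auto
next
  case (PNot a)
  then show ?case
    by (intro saturated_unary[OF sat, where C = PNot])
      (auto simp: is_P_formula_imp_is_G_formula dest: profile_eq_imp_is_P_formula_eq intro: profile_cong_unary)
next
  case (PAnd a b)
  then show ?case
    by (intro saturated_binary[OF sat, where C = PAnd])
      (auto simp: is_P_formula_imp_is_G_formula dest: profile_eq_imp_is_P_formula_eq intro: profile_cong_binary)
next
  case (POr a b)
  then show ?case
    by (intro saturated_binary[OF sat, where C = POr])
      (auto simp: is_P_formula_imp_is_G_formula dest: profile_eq_imp_is_P_formula_eq intro: profile_cong_binary)
next
  case (GAnd a b)
  then show ?case
    by (intro saturated_binary[OF sat, where C = GAnd]) (auto intro: profile_cong_binary)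
next
  case (GOr a b)
  then show ?case
    by (intro saturated_binary[OF sat, where C = GOr])
      (auto simp: is_P_formula_imp_is_G_formula dest: profile_eq_imp_is_P_formula_eq intro: profile_cong_binary)
next
  case (GX a)
  then show ?case
    by (intro saturated_unary[OF sat, where C = GX]) (auto intro: profile_cong_unary)
next
  case (GG a)
  then show ?case
    by (intro saturated_unary[OF sat, where C = GG]) (auto intro: profile_cong_unary)
next
  case (GF a)
  then show ?case
    by (intro saturated_unary[OF sat, where C = GF])
      (auto simp: is_P_formula_imp_is_G_formula dest: profile_eq_imp_is_P_formula_eq intro: profile_cong_unary)
next
  case (GU a b)
  then show ?case
    by (intro saturated_binary[OF sat, where C = GU])
      (auto simp: is_P_formula_imp_is_G_formula dest: profile_eq_imp_is_P_formula_eq intro: profile_cong_binary)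
qed

lemma profile_range_subset: "range profile \<subseteq> UNIV \<times> (\<Pi>\<^sub>E K\<in>Ks. Pow (states K))"
  unfolding profile_def by auto

lemma card_range_profile_le:
  assumes "finite Ks" "\<And>K. K \<in> Ks \<Longrightarrow> finite (states K)"
  shows "finite (range profile)" "card (range profile) \<le> 2 ^ ((\<Sum>K\<in>Ks. card (states K)) + 1)"
proof -
  have space: "finite ((UNIV :: bool set) \<times> (\<Pi>\<^sub>E K\<in>Ks. Pow (states K)))"
    using assms by (intro finite_cartesian_product finite_PiE) auto
  then show "finite (range profile)" using profile_range_subset by (rule finite_subset[rotated])
  show "card (range profile) \<le> 2 ^ ((\<Sum>K\<in>Ks. card (states K)) + 1)"
    using card_mono[OF space profile_range_subset] card_bool_times_PiE_Pow[OF assms] by simp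
qed

theorem ex_same_profile_sz_le:
  assumes "finite (range profile)" "is_G_formula Prop L \<phi>"
  shows "\<exists>\<psi>. is_G_formula Prop L \<psi> \<and> profile \<psi> = profile \<phi> \<and> sz \<psi> \<le> card (range profile)"
proof -
  obtain D where D: "saturated D" using saturated_exists[OF assms(1)] ..
  then obtain \<psi> where "\<psi> \<in> D" and same: "profile \<psi> = profile \<phi>"
    using saturated_represents[OF D assms(2)] by (metis imageE)
  then have sub: "subformulas \<psi> \<subseteq> D" and "is_G_formula Prop L \<psi>"
    using saturated_memD[OF D] by blast+
  have "inj_on profile (subformulas \<psi>)"
    using D sub inj_on_subset unfolding saturated_def irredundant_def by blast
  then have "sz \<psi> = card (profile ` subformulas \<psi>)" by (simp add: sz_def card_image)
  also have "\<dots> \<le> card (range profile)" using assms(1) by (rule card_mono) blast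
  finally show ?thesis using \<open>is_G_formula Prop L \<psi>\<close> same by blast
qed

lemma profile_eq_imp_kripke_sat_eq:
  assumes "profile \<psi> = profile \<phi>" "K \<in> Ks" "init K \<subseteq> states K"
  shows "kripke_sat K (read_ltl \<psi>) = kripke_sat K (read_ltl \<phi>)"
  using assms unfolding kripke_sat_def profile_eq_iff by blast

end

theorem corollary3:
  fixes Prop :: "'p set" and L :: "'p ltlp_op set"
    and Pos Neg :: "('s, 'p) kripke set"
  assumes "finite Prop" and "Prop \<noteq> {}"
    and "L \<subseteq> ltlp_ops Prop"
    and "finite Pos" and "finite Neg"
    and "\<forall>K\<in>Pos \<union> Neg. in_T Prop K"
    and "\<exists>\<phi>. is_L_formula Prop L \<phi> \<and> separating Pos Neg \<phi>"
  shows "\<exists>\<phi>. is_L_formula Prop L \<phi> \<and> separating Pos Neg \<phi> \<and>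
           sz \<phi> \<le> 2 ^ ((\<Sum>K\<in>Pos \<union> Neg. card (states K)) + 1)"
proof -
  have T: "\<And>K. K \<in> Pos \<union> Neg \<Longrightarrow> in_T Prop K" using assms(6) by blast
  interpret ltlp_profiles Prop L "Pos \<union> Neg"
    by unfold_locales (rule in_T_imp_kripke_serial[OF T])
  have "finite (Pos \<union> Neg)" "\<And>K. K \<in> Pos \<union> Neg \<Longrightarrow> finite (states K)"
    using assms(4,5) T by (auto simp: in_T_def)
  note profiles = card_range_profile_le[OF this]
  obtain \<phi> where \<phi>: "is_L_formula Prop L \<phi>" "separating Pos Neg \<phi>" using assms(7) by blast
  then obtain \<psi> where \<psi>: "is_G_formula Prop L \<psi>" "profile \<psi> = profile \<phi>" "sz \<psi> \<le> card (range profile)"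
    using ex_same_profile_sz_le[OF profiles(1)] by (auto simp: is_L_formula_def)
  have "separating Pos Neg \<psi>"
    using \<phi>(2) profile_eq_imp_kripke_sat_eq[OF \<psi>(2)] T unfolding separating_def in_T_def by auto
  then show ?thesis using \<psi> profiles(2) by (auto simp: is_L_formula_def)
qed

end
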